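(* Let $\mathfrak{plc}_I$ be a tropical plactic algebra with totally ordered set of generators $\{\mathfrak a_i : i\in I\}$. Then for all generators $\mathfrak a,\mathfrak b,\mathfrak c$: (KN1) $\mathfrak a\,\mathfrak c\,\mathfrak b=\mathfrak c\,\mathfrak a\,\mathfrak b$ whenever $\mathfrak a\le \mathfrak b<\mathfrak c$; (KN2) $\mathfrak b\,\mathfrak a\,\mathfrak c=\mathfrak b\,\mathfrak c\,\mathfrak a$ whenever $\mathfrak a<\mathfrak b\le \mathfrak c$. Consequently, the multiplicative monoid of $\mathfrak{plc}_I$ satisfies the plactic (Knuth) relations on its generators, i.e. the monoid morphism from the free monoid on the ordered alphabet $\{\mathfrak a_i\}$ to $(\mathfrak{plc}_I,\cdot)$ factors through the plactic monoid.
   Context: A tropical plactic algebra (troplactic algebra) $\mathfrak{plc}_I$ ($I\subseteq\mathbb N$ nonempty) is an idempotent semiring $(\mathfrak{plc}_I,+,\cdot)$ (addition commutative, associative, with $\mathfrak u+\mathfrak u=\mathfrak u$ for all $\mathfrak u$; multiplication associative, possibly noncommutative, with identity $\mathfrak e$; a zero $\mathfrak o$ which is the additive identity and multiplicatively absorbing; multiplication distributes over addition on both sides), generated as a semiring by a totally ordered set of elements $\{\mathfrak a_i: i\in I\}$, such that for all generators $\mathfrak a\le\mathfrak b\le\mathfrak c$: (TPA1) $\mathfrak a=\mathfrak e+\mathfrak a$; (TPA2) $\mathfrak b\mathfrak a=\mathfrak a+\mathfrak b$ when $\mathfrak b>\mathfrak a$; (TPA3) $\mathfrak a(\mathfrak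 b+\mathfrak c)=\mathfrak a\mathfrak b+\mathfrak c$; (TPA4) $(\mathfrak a+\mathfrak b)\mathfrak c=\mathfrak a+\mathfrak b\mathfrak c$. The plactic monoid on an ordered alphabet is the free monoid modulo the congruence generated by the Knuth relations $xzy=zxy$ ($x\le y<z$) and $yxz=yzx$ ($x<y\le z$). *)

theory Defs
  imports Main
begin

text \<open>The carrier of the semiring is the type 'a; we use the classes semiring_0 and
  monoid_mult (which do not force 0 \<noteq> 1).  Generators are a_i = g i for i in I,
  ordered by their index.\<close>

inductive_set gen_semiring :: "'a::{semiring_0,monoid_mult} set \<Rightarrow> 'a set"
  for S :: "'a set" where
  gen_zero: "0 \<in> gen_semiring S"
| gen_one: "1 \<in> gen_semiring S"
| gen_base: "s \<in> S \<Longrightarrow> s \<in> gen_semiring S"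
| gen_add: "x \<in> gen_semiring S \<Longrightarrow> y \<in> gen_semiring S \<Longrightarrow> x + y \<in> gen_semiring S"
| gen_mult: "x \<in> gen_semiring S \<Longrightarrow> y \<in> gen_semiring S \<Longrightarrow> x * y \<in> gen_semiring S"

definition troplactic :: "nat set \<Rightarrow> (nat \<Rightarrow> 'a::{semiring_0,monoid_mult}) \<Rightarrow> bool" where
  "troplactic I g \<longleftrightarrow>
     I \<noteq> {} \<and> inj_on g I \<and>
     (\<forall>x::'a. x + x = x) \<and>
     gen_semiring (g ` I) = UNIV \<and>
     (\<forall>i\<in>I. g i = 1 + g i) \<and>
     (\<forall>i\<in>I. \<forall>j\<in>I. i < j \<longrightarrow> g j * g i = g i + g j) \<and>
     (\<forall>i\<in>I. \<forall>j\<in>I. \<forall>k\<in>I. i \<le> j \<longrightarrow> j \<le> k \<longrightarrow> g i * (g j + g k) = g i * g j + g k) \<and>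
     (\<forall>i\<in>I. \<forall>j\<in>I. \<forall>k\<in>I. i \<le> j \<longrightarrow> j \<le> k \<longrightarrow> (g i + g j) * g k = g i + g j * g k)"

inductive plactic_eq :: "nat list \<Rightarrow> nat list \<Rightarrow> bool" where
  knuth1: "x \<le> y \<Longrightarrow> y < z \<Longrightarrow> plactic_eq (u @ [x, z, y] @ v) (u @ [z, x, y] @ v)"
| knuth2: "x < y \<Longrightarrow> y \<le> z \<Longrightarrow> plactic_eq (u @ [y, x, z] @ v) (u @ [y, z, x] @ v)"
| refl: "plactic_eq w w"
| sym: "plactic_eq w w' \<Longrightarrow> plactic_eq w' w"
| trans: "plactic_eq w w' \<Longrightarrow> plactic_eq w' w'' \<Longrightarrow> plactic_eq w w''"

definition word_eval :: "(nat \<Rightarrow> 'a::monoid_mult) \<Rightarrow> nat list \<Rightarrow> 'a" where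
  "word_eval g w = prod_list (map g w)"

end

theory Submission
  imports Defs
begin

text \<open>Each Knuth relation is verified by rewriting both sides to one normal form: (TPA2)
  turns a descending pair of generators into a sum, after which (TPA3) resp. (TPA4) and
  distributivity give the same expression. The only further ingredient is the absorption
  \<open>b + x * b = x * b\<close> (resp. \<open>x + x * b = x * b\<close>) obtained from
  (TPA1), \<open>x = 1 + x\<close>. Since a plactic congruence class consists of words over the
  same letters, the Knuth relations on the generators then pass to all plactic-equivalent
  words.\<close>

lemma absorb_right_factor:
  fixes x b :: "'a::{semiring_0,monoid_mult}"
  assumes "x = 1 + x"
  shows "b + x * b = x * b"
proof -
  have "x * b = (1 + x) * b" using assms by simp
  also have "\<dots> = b + x * b" by (simp add: distrib_right)
  finally show ?thesis by simp
qed

lemma absorb_left_factor: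
  fixes x b :: "'a::{semiring_0,monoid_mult}"
  assumes "x = 1 + x"
  shows "b + b * x = b * x"
proof -
  have "b * x = b * (1 + x)" using assms by simp
  also have "\<dots> = b + b * x" by (simp add: distrib_left)
  finally show ?thesis by simp
qed

lemma knuth1_from_tpa:
  fixes a b c :: "'a::{semiring_0,monoid_mult}"
  assumes idem: "b + b = b"
    and unit_a: "a = 1 + a"
    and swap_cb: "c * b = b + c" and swap_ca: "c * a = a + c"
    and tpa3: "a * (b + c) = a * b + c"
  shows "a * c * b = c * a * b"
proof -
  have "a * c * b = a * b + c"
    using tpa3 by (simp add: mult.assoc swap_cb)
  moreover have "c * a * b = a * b + c"
  proof -
    have "c * a * b = b + a * b + c"
      by (simp add: swap_ca distrib_right swap_cb add_ac)
    also have "b + a * b = a * b"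
      using absorb_right_factor[OF unit_a, of b] idem by (metis add.assoc)
    finally show ?thesis .
  qed
  ultimately show ?thesis by simp
qed

lemma knuth2_from_tpa:
  fixes a b c :: "'a::{semiring_0,monoid_mult}"
  assumes unit_c: "c = 1 + c"
    and swap_ba: "b * a = a + b" and swap_ca: "c * a = a + c"
    and tpa4: "(a + b) * c = a + b * c"
  shows "b * a * c = b * c * a"
proof -
  have "b * c * a = a + (b + b * c)"
    by (simp add: mult.assoc swap_ca distrib_left swap_ba add.assoc)
  also have "b + b * c = b * c"
    using absorb_left_factor[OF unit_c] .
  finally show ?thesis using tpa4 by (simp add: swap_ba)
qed

lemma troplactic_knuth1:
  assumes "troplactic I g" and "i \<in> I" "j \<in> I" "k \<in> I" and "i \<le> j" "j < k"
  shows "g i * g k * g j = g k * g i * g j"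
  using assms by (intro knuth1_from_tpa) (auto simp: troplactic_def)

lemma troplactic_knuth2:
  assumes "troplactic I g" and "i \<in> I" "j \<in> I" "k \<in> I" and "i < j" "j \<le> k"
  shows "g j * g i * g k = g j * g k * g i"
  using assms by (intro knuth2_from_tpa) (auto simp: troplactic_def)

lemma plactic_eq_set_eq: "plactic_eq u w \<Longrightarrow> set u = set w"
  by (induction rule: plactic_eq.induct) auto

lemma word_eval_plactic_eq:
  fixes g :: "nat \<Rightarrow> 'a::monoid_mult"
  assumes "\<And>i j k. i \<in> I \<Longrightarrow> j \<in> I \<Longrightarrow> k \<in> I \<Longrightarrow> i \<le> j \<Longrightarrow> j < k \<Longrightarrow>
                     g i * g k * g j = g k * g i * g j"
    and "\<And>i j k. i \<in> I \<Longrightarrow> j \<in> I \<Longrightarrow> k \<in> I \<Longrightarrow> i < j \<Longrightarrow> j \<le> k \<Longrightarrow>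
                     g j * g i * g k = g j * g k * g i"
  shows "plactic_eq u w \<Longrightarrow> set u \<subseteq> I \<Longrightarrow> word_eval g u = word_eval g w"
proof (induction rule: plactic_eq.induct)
  case (knuth1 x y z u v)
  then show ?case
    using assms(1)[of x y z] by (simp add: word_eval_def mult.assoc[symmetric])
next
  case (knuth2 x y z u v)
  then show ?case
    using assms(2)[of x y z] by (simp add: word_eval_def mult.assoc[symmetric])
next
  case (refl w)
  then show ?case by simp
next
  case (sym w w')
  then show ?case using plactic_eq_set_eq by auto
next
  case (trans w w' w'')
  then show ?case using plactic_eq_set_eq by auto
qed

theorem mainTheorem1:
  fixes I :: "nat set" and g :: "nat \<Rightarrow> 'a::{semiring_0,monoid_mult}"
  assumes "troplactic I g"
  shows "(\<forall>i\<in>I. \<forall>j\<in>I. \<forall>k\<in>I. i \<le> j \<longrightarrow> j < k \<longrightarrow> g i * g k * g j = g k * g i * g j)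
       \<and> (\<forall>i\<in>I. \<forall>j\<in>I. \<forall>k\<in>I. i < j \<longrightarrow> j \<le> k \<longrightarrow> g j * g i * g k = g j * g k * g i)
       \<and> (\<forall>u w. set u \<subseteq> I \<longrightarrow> set w \<subseteq> I \<longrightarrow> plactic_eq u w \<longrightarrow> word_eval g u = word_eval g w)"
  using troplactic_knuth1[OF assms] troplactic_knuth2[OF assms]
    word_eval_plactic_eq[of I g, OF troplactic_knuth1[OF assms] troplactic_knuth2[OF assms]]
  by blast

end
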